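(* Let $H=(E,\{X_i:i\in[n]\})$ be a hypergraph such that $|X_i\cap X_j|\le1$ for all distinct $i,j\in[n]$, the line graph $G_H$ is complete, and for all distinct $p,q\in[n]$ there are elements $a\in X_p$ and $b\in X_q$ such that no $i\in[n]$ has $\{a,b\}\subseteq X_i$. Let $\rho(A)=\sum_{i=1}^n\min\{|A\cap X_i|,1\}$ for $A\subseteq E$. Let $\sigma$ be any polymatroid on $E$ with $\sigma(A)=\rho(A)$ whenever either $|A|\le2$, or $|A|=3$ and $A\subseteq X_i$ for some $i\in[n]$. If $\sigma(E)<n$, then $\sigma$ is indecomposable. In particular, the truncation $T(\rho,s)$ is indecomposable whenever $$\max\{\rho(A): |A|\le2\text{ or }A\text{ is a }3\text{-element subset of a hyperedge}\}\le s<n.$$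
   Context: A polymatroid on a finite set $E$ is a function $\rho:2^E\to\mathbb{Z}$ that is normalized, non-decreasing and submodular. A hypergraph is $H=(E,\mathcal{E})$ with $E$ finite and $\mathcal{E}=\{X_i:i\in[n]\}$ a set of nonempty subsets of $E$. The line graph $G_H$ has vertex set $[n]$ with $ij$ an edge iff $i\ne j$ and $X_i\cap X_j\ne\emptyset$. A polymatroid is indecomposable if it cannot be written as a sum $r_{M_1}+\cdots+r_{M_k}$ of rank functions of matroids on its ground set for any $k$. The truncation $T(\rho,s)$ is the polymatroid $X\mapsto\min\{\rho(X),s\}$. *)

theory Defs
  imports Main
begin

definition polymatroid :: "'a set \<Rightarrow> ('a set \<Rightarrow> int) \<Rightarrow> bool" where
  "polymatroid E f \<longleftrightarrow>
     f {} = 0 \<and>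
     (\<forall>A B. A \<subseteq> B \<and> B \<subseteq> E \<longrightarrow> f A \<le> f B) \<and>
     (\<forall>A B. A \<subseteq> E \<and> B \<subseteq> E \<longrightarrow> f (A \<union> B) + f (A \<inter> B) \<le> f A + f B)"

definition matroid_rank :: "'a set \<Rightarrow> ('a set \<Rightarrow> int) \<Rightarrow> bool" where
  "matroid_rank E r \<longleftrightarrow>
     polymatroid E r \<and> (\<forall>A. A \<subseteq> E \<longrightarrow> 0 \<le> r A \<and> r A \<le> int (card A))"

definition indecomposable :: "'a set \<Rightarrow> ('a set \<Rightarrow> int) \<Rightarrow> bool" where
  "indecomposable E f \<longleftrightarrow>
     \<not> (\<exists>(k::nat) (r :: nat \<Rightarrow> 'a set \<Rightarrow> int).
          (\<forall>j<k. matroid_rank E (r j)) \<and> (\<forall>A. A \<subseteq> E \<longrightarrow> f A = (\<Sum>j<k. r j A)))"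

definition truncation :: "('a set \<Rightarrow> int) \<Rightarrow> int \<Rightarrow> 'a set \<Rightarrow> int" where
  "truncation f s = (\<lambda>X. min (f X) s)"

text \<open>A hypergraph (E, {X_i : i in [n]}) with [n] = {1..n}: finite E, the X_i are
  nonempty subsets of E, pairwise distinct (it is a set of hyperedges).\<close>
definition hypergraph :: "'a set \<Rightarrow> (nat \<Rightarrow> 'a set) \<Rightarrow> nat \<Rightarrow> bool" where
  "hypergraph E X n \<longleftrightarrow> finite E \<and> inj_on X {1..n} \<and>
     (\<forall>i\<in>{1..n}. X i \<noteq> {} \<and> X i \<subseteq> E)"

definition line_graph_adj :: "(nat \<Rightarrow> 'a set) \<Rightarrow> nat \<Rightarrow> nat \<Rightarrow> bool" where
  "line_graph_adj X i j \<longleftrightarrow> i \<noteq> j \<and> X i \<inter> X j \<noteq> {}"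

definition line_graph_complete :: "(nat \<Rightarrow> 'a set) \<Rightarrow> nat \<Rightarrow> bool" where
  "line_graph_complete X n \<longleftrightarrow>
     (\<forall>i\<in>{1..n}. \<forall>j\<in>{1..n}. i \<noteq> j \<longrightarrow> line_graph_adj X i j)"

definition hyp_rho :: "(nat \<Rightarrow> 'a set) \<Rightarrow> nat \<Rightarrow> 'a set \<Rightarrow> int" where
  "hyp_rho X n A = (\<Sum>i=1..n. min (int (card (A \<inter> X i))) 1)"

definition small_sets :: "'a set \<Rightarrow> (nat \<Rightarrow> 'a set) \<Rightarrow> nat \<Rightarrow> 'a set set" where
  "small_sets E X n = {A. A \<subseteq> E \<and>
     (card A \<le> 2 \<or> (card A = 3 \<and> (\<exists>i\<in>{1..n}. A \<subseteq> X i)))}"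

end

theory Submission
  imports Defs
begin

text \<open>Write excess r A for the sum of r over the singletons of A minus r A. If
  \<sigma> = r_1 + ... + r_k with matroid rank functions r_j, then the excess is additive
  over the summands, and for \<rho> it counts, hyperedge by hyperedge, how many elements
  beyond the first one a set has in it. Agreement of \<sigma> with \<rho> on pairs and on triples
  inside a hyperedge X_i therefore forces a single summand r_j in which X_i is a set of
  pairwise parallel non-loops. Two hyperedges meet, since G_H is complete, so if they
  shared their summand, parallelism would propagate through a common element to a pair
  a \<in> X_p, b \<in> X_q lying in no common hyperedge, whose excess is 0. Hence distinct
  hyperedges use distinct summands, each of rank at least 1 on E, and \<sigma>(E) \<ge> n.\<close>

lemma polymatroid_empty: "polymatroid E f \<Longrightarrow> f {} = 0"
  unfolding polymatroid_def by blast

lemma polymatroid_mono: "polymatroid E f \<Longrightarrow> A \<subseteq> B \<Longrightarrow> B \<subseteq> E \<Longrightarrow> f A \<le> f B"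
  unfolding polymatroid_def by blast

lemma polymatroid_submodular:
  "polymatroid E f \<Longrightarrow> A \<subseteq> E \<Longrightarrow> B \<subseteq> E \<Longrightarrow> f (A \<union> B) + f (A \<inter> B) \<le> f A + f B"
  unfolding polymatroid_def by blast

lemma polymatroid_nonneg: "polymatroid E f \<Longrightarrow> A \<subseteq> E \<Longrightarrow> 0 \<le> f A"
  using polymatroid_mono[of E f "{}" A] polymatroid_empty[of E f] by simp

lemma matroid_rank_polymatroid: "matroid_rank E r \<Longrightarrow> polymatroid E r"
  unfolding matroid_rank_def by blast

lemma matroid_rank_le_card: "matroid_rank E r \<Longrightarrow> A \<subseteq> E \<Longrightarrow> r A \<le> int (card A)"
  unfolding matroid_rank_def by blast

definition excess :: "('a set \<Rightarrow> int) \<Rightarrow> 'a set \<Rightarrow> int" where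
  "excess f A = (\<Sum>a\<in>A. f {a}) - f A"

lemma excess_singleton [simp]: "excess f {x} = 0"
  by (simp add: excess_def)

lemma excess_pair: "x \<noteq> y \<Longrightarrow> excess f {x, y} = f {x} + f {y} - f {x, y}"
  by (simp add: excess_def)

lemma excess_triple:
  "x \<noteq> y \<Longrightarrow> y \<noteq> z \<Longrightarrow> x \<noteq> z \<Longrightarrow> excess f {x, y, z} = f {x} + f {y} + f {z} - f {x, y, z}"
  by (simp add: excess_def)

lemma excess_cong: "(\<And>a. a \<in> A \<Longrightarrow> f {a} = g {a}) \<Longrightarrow> f A = g A \<Longrightarrow> excess f A = excess g A"
  by (simp add: excess_def)

lemma excess_pair_nonneg:
  assumes "polymatroid E f" "x \<in> E" "y \<in> E"
  shows "0 \<le> excess f {x, y}"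
proof (cases "x = y")
  case False
  have "f ({x} \<union> {y}) + f ({x} \<inter> {y}) \<le> f {x} + f {y}"
    using assms by (intro polymatroid_submodular) auto
  with False polymatroid_empty[OF assms(1)] show ?thesis
    by (simp add: excess_pair insert_commute)
qed simp

lemma excess_pair_le_excess_triple:
  assumes "polymatroid E f" "x \<in> E" "y \<in> E" "z \<in> E" "x \<noteq> y" "y \<noteq> z" "x \<noteq> z"
  shows "excess f {x, y} + excess f {y, z} \<le> excess f {x, y, z}"
proof -
  have "f ({x, y} \<union> {y, z}) + f ({x, y} \<inter> {y, z}) \<le> f {x, y} + f {y, z}"
    using assms by (intro polymatroid_submodular) auto
  moreover have "{x, y} \<union> {y, z} = {x, y, z}" "{x, y} \<inter> {y, z} = {y}"
    using assms by auto
  ultimately show ?thesis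
    using assms by (simp add: excess_pair excess_triple)
qed

lemma excess_sum:
  "excess (\<lambda>A. \<Sum>j\<in>J. r j A) A = (\<Sum>j\<in>J. excess (r j) A)"
  by (simp add: excess_def sum_subtractf sum.swap[of _ A])

text \<open>parallel r x x says that x is not a loop.\<close>
definition parallel :: "('a set \<Rightarrow> int) \<Rightarrow> 'a \<Rightarrow> 'a \<Rightarrow> bool" where
  "parallel r x y \<longleftrightarrow> r {x} = 1 \<and> r {y} = 1 \<and> r {x, y} = 1"

lemma parallel_sym: "parallel r x y \<Longrightarrow> parallel r y x"
  by (simp add: parallel_def insert_commute)

lemma parallel_refl: "parallel r x y \<Longrightarrow> parallel r x x"
  by (simp add: parallel_def)

lemma parallel_trans:
  assumes "polymatroid E r" "x \<in> E" "y \<in> E" "z \<in> E" "parallel r x y" "parallel r y z"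
  shows "parallel r x z"
proof -
  have "r ({x, y} \<union> {y, z}) + r ({x, y} \<inter> {y, z}) \<le> r {x, y} + r {y, z}"
    using assms by (intro polymatroid_submodular) auto
  moreover have "r {y} \<le> r ({x, y} \<inter> {y, z})" "r {x, z} \<le> r ({x, y} \<union> {y, z})" "r {x} \<le> r {x, z}"
    using assms by (auto intro: polymatroid_mono)
  ultimately show ?thesis
    using assms(5,6) unfolding parallel_def by linarith
qed

lemma parallel_iff_excess_pos:
  assumes "matroid_rank E r" "x \<in> E" "y \<in> E" "x \<noteq> y"
  shows "parallel r x y \<longleftrightarrow> 0 < excess r {x, y}"
proof
  assume "0 < excess r {x, y}"
  moreover have "r {x} \<le> r {x, y}" "r {y} \<le> r {x, y}"
    using assms by (auto intro: polymatroid_mono matroid_rank_polymatroid)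
  moreover have "r {x} \<le> 1" "r {y} \<le> 1" "0 \<le> r {x}" "0 \<le> r {y}"
    using assms matroid_rank_le_card[OF assms(1), of "{x}"] matroid_rank_le_card[OF assms(1), of "{y}"]
    by (auto intro: polymatroid_nonneg matroid_rank_polymatroid)
  ultimately show "parallel r x y"
    using assms(4) by (simp add: excess_pair parallel_def)
qed (use assms(4) in \<open>simp add: excess_pair parallel_def\<close>)

lemma hyp_rho_singleton: "hyp_rho X n {a} = (\<Sum>i=1..n. of_bool (a \<in> X i))"
  unfolding hyp_rho_def by (intro sum.cong) auto

lemma hyp_rho_excess:
  assumes "finite A"
  shows "excess (hyp_rho X n) A = (\<Sum>i=1..n. int (card (A \<inter> X i)) - min (int (card (A \<inter> X i))) 1)"
proof -
  have "(\<Sum>a\<in>A. hyp_rho X n {a}) = (\<Sum>i=1..n. \<Sum>a\<in>A. of_bool (a \<in> X i))"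
    unfolding hyp_rho_singleton by (rule sum.swap)
  also have "\<dots> = (\<Sum>i=1..n. int (card (A \<inter> X i)))"
    using assms by simp
  finally have "(\<Sum>a\<in>A. hyp_rho X n {a}) = (\<Sum>i=1..n. int (card (A \<inter> X i)))" .
  then show ?thesis
    by (simp add: excess_def hyp_rho_def sum_subtractf)
qed

lemma hyp_rho_singleton_pos: "i \<in> {1..n} \<Longrightarrow> a \<in> X i \<Longrightarrow> 0 < hyp_rho X n {a}"
  unfolding hyp_rho_singleton by (rule sum_pos2[of _ i]) auto

lemma hyp_rho_excess_eq_0:
  assumes "finite A" "\<forall>i\<in>{1..n}. card (A \<inter> X i) \<le> 1"
  shows "excess (hyp_rho X n) A = 0"
  using assms by (simp add: hyp_rho_excess min_def)

definition edges_separated :: "(nat \<Rightarrow> 'a set) \<Rightarrow> nat \<Rightarrow> bool" where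
  "edges_separated X n \<longleftrightarrow> (\<forall>p\<in>{1..n}. \<forall>q\<in>{1..n}. p \<noteq> q \<longrightarrow>
     (\<exists>a\<in>X p. \<exists>b\<in>X q. \<not> (\<exists>i\<in>{1..n}. {a, b} \<subseteq> X i)))"

locale linear_hypergraph =
  fixes E :: "'a set" and X :: "nat \<Rightarrow> 'a set" and n :: nat
  assumes hypergraph: "hypergraph E X n"
    and linear: "\<forall>i\<in>{1..n}. \<forall>j\<in>{1..n}. i \<noteq> j \<longrightarrow> card (X i \<inter> X j) \<le> 1"
begin

lemma finite_E: "finite E"
  using hypergraph unfolding hypergraph_def by blast

lemma edge_subset: "i \<in> {1..n} \<Longrightarrow> X i \<subseteq> E"
  using hypergraph unfolding hypergraph_def by blast

lemma edge_nonempty: "i \<in> {1..n} \<Longrightarrow> X i \<noteq> {}"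
  using hypergraph unfolding hypergraph_def by blast

lemma finite_edge: "i \<in> {1..n} \<Longrightarrow> finite (X i)"
  using edge_subset finite_E by (rule finite_subset)

lemma hyp_rho_excess_in_edge:
  assumes i: "i \<in> {1..n}" and A: "A \<subseteq> X i" "2 \<le> card A"
  shows "excess (hyp_rho X n) A = int (card A) - 1"
proof -
  define t where "t i' = int (card (A \<inter> X i')) - min (int (card (A \<inter> X i'))) 1" for i'
  have "t i' = 0" if "i' \<in> {1..n} - {i}" for i'
  proof -
    have "card (A \<inter> X i') \<le> card (X i \<inter> X i')"
      using A finite_edge[OF i] by (intro card_mono) auto
    also have "\<dots> \<le> 1"
      using linear i that by auto
    finally show ?thesis
      unfolding t_def by simp
  qed
  then have "(\<Sum>i'=1..n. t i') = t i"
    using i by (simp add: sum.remove)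
  moreover have "finite A"
    using A(2) card.infinite by fastforce
  ultimately show ?thesis
    using A unfolding t_def by (simp add: hyp_rho_excess Int_absorb2)
qed

end

locale matroid_sum =
  fixes E :: "'a set" and \<sigma> :: "'a set \<Rightarrow> int" and k :: nat and r :: "nat \<Rightarrow> 'a set \<Rightarrow> int"
  assumes rank_summand: "j < k \<Longrightarrow> matroid_rank E (r j)"
    and sum_ranks: "A \<subseteq> E \<Longrightarrow> \<sigma> A = (\<Sum>j<k. r j A)"
begin

lemma polymatroid_summand: "j < k \<Longrightarrow> polymatroid E (r j)"
  using rank_summand by (rule matroid_rank_polymatroid)

lemma excess_eq_sum:
  assumes "A \<subseteq> E"
  shows "excess \<sigma> A = (\<Sum>j<k. excess (r j) A)"
proof -
  have "excess \<sigma> A = excess (\<lambda>A. \<Sum>j<k. r j A) A"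
    using assms by (intro excess_cong sum_ranks) auto
  then show ?thesis
    by (simp add: excess_sum)
qed

lemma excess_pos_if_parallel:
  assumes "j < k" "x \<in> E" "y \<in> E" "x \<noteq> y" "parallel (r j) x y"
  shows "0 < excess \<sigma> {x, y}"
proof -
  have "excess (r j) {x, y} \<le> (\<Sum>j<k. excess (r j) {x, y})"
    using assms by (intro member_le_sum excess_pair_nonneg[OF polymatroid_summand]) auto
  with assms show ?thesis
    by (simp add: excess_eq_sum parallel_iff_excess_pos[OF rank_summand])
qed

lemma parallel_if_excess_pos:
  assumes "x \<in> E" "y \<in> E" "0 < excess \<sigma> {x, y}"
  obtains j where "j < k" "parallel (r j) x y"
proof -
  have "x \<noteq> y"
    using assms(3) by auto
  from assms obtain j where "j < k" "0 < excess (r j) {x, y}"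
    using sum_nonpos[of "{..<k}" "\<lambda>j. excess (r j) {x, y}"] by (force simp: excess_eq_sum not_le)
  with assms \<open>x \<noteq> y\<close> show thesis
    using that parallel_iff_excess_pos[OF rank_summand] by blast
qed

lemma nonloop_if_pos:
  assumes "x \<in> E" "0 < \<sigma> {x}"
  obtains j where "j < k" "parallel (r j) x x"
proof -
  from assms obtain j where j: "j < k" "0 < r j {x}"
    using sum_nonpos[of "{..<k}" "\<lambda>j. r j {x}"] by (force simp: sum_ranks not_le)
  moreover have "r j {x} \<le> 1"
    using matroid_rank_le_card[OF rank_summand[OF j(1)], of "{x}"] assms by simp
  ultimately show thesis
    using that by (simp add: parallel_def)
qed

lemma excess_pair_eq_if_tight_triple:
  assumes E: "x \<in> E" "y \<in> E" "z \<in> E" and distinct: "x \<noteq> y" "y \<noteq> z" "x \<noteq> z"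
    and pairs: "excess \<sigma> {x, y} = 1" "excess \<sigma> {y, z} = 1" "excess \<sigma> {x, z} = 1"
    and triple: "excess \<sigma> {x, y, z} = 2" and j: "j < k"
  shows "excess (r j) {x, y} = excess (r j) {x, z}"
proof -
  have "{x, y} \<subseteq> E" "{y, z} \<subseteq> E" "{x, z} \<subseteq> E" "{x, y, z} \<subseteq> E"
    using E by auto
  note sums = this[THEN excess_eq_sum]
  have le_y: "excess (r j') {x, y} + excess (r j') {y, z} \<le> excess (r j') {x, y, z}" if "j' < k" for j'
    using excess_pair_le_excess_triple[OF polymatroid_summand[OF that] E distinct] .
  have le_z: "excess (r j') {x, z} + excess (r j') {y, z} \<le> excess (r j') {x, y, z}" if "j' < k" for j'
    using excess_pair_le_excess_triple[OF polymatroid_summand[OF that] E(1,3,2)] distinct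
    by (simp add: insert_commute)
  have "excess (r j) {x, y} + excess (r j) {y, z} = excess (r j) {x, y, z}"
    using sums pairs triple j le_y
    by (intro sum_mono_inv[where f = "\<lambda>j. excess (r j) {x, y} + excess (r j) {y, z}" and I = "{..<k}"])
      (auto simp: sum.distrib)
  moreover have "excess (r j) {x, z} + excess (r j) {y, z} = excess (r j) {x, y, z}"
    using sums pairs triple j le_z
    by (intro sum_mono_inv[where f = "\<lambda>j. excess (r j) {x, z} + excess (r j) {y, z}" and I = "{..<k}"])
      (auto simp: sum.distrib)
  ultimately show ?thesis
    by simp
qed

end

locale matroid_sum_on_hypergraph = linear_hypergraph E X n + matroid_sum E \<sigma> k r
  for E :: "'a set" and X n \<sigma> k r +
  assumes agree: "\<forall>A\<in>small_sets E X n. \<sigma> A = hyp_rho X n A"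
begin

lemma agree_singleton: "x \<in> E \<Longrightarrow> \<sigma> {x} = hyp_rho X n {x}"
  using agree unfolding small_sets_def by auto

lemma excess_in_edge:
  assumes i: "i \<in> {1..n}" and A: "A \<subseteq> X i" "2 \<le> card A" "card A \<le> 3"
  shows "excess \<sigma> A = int (card A) - 1"
proof -
  have "A \<subseteq> E"
    using A(1) edge_subset[OF i] by blast
  moreover have "A \<in> small_sets E X n"
    using \<open>A \<subseteq> E\<close> A i unfolding small_sets_def by auto
  ultimately have "excess \<sigma> A = excess (hyp_rho X n) A"
    using agree agree_singleton by (intro excess_cong) auto
  with hyp_rho_excess_in_edge[OF i A(1,2)] show ?thesis
    by simp
qed

lemma excess_eq_0_if_no_common_edge:
  assumes "x \<in> E" "y \<in> E" "\<forall>i\<in>{1..n}. \<not> {x, y} \<subseteq> X i"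
  shows "excess \<sigma> {x, y} = 0"
proof -
  have "{x, y} \<in> small_sets E X n"
    using assms(1,2) unfolding small_sets_def by (auto simp: card_insert_le_m1)
  then have "excess \<sigma> {x, y} = excess (hyp_rho X n) {x, y}"
    using agree agree_singleton assms(1,2) by (intro excess_cong) auto
  also have "\<dots> = 0"
    using assms(3) by (intro hyp_rho_excess_eq_0) (auto simp: Int_insert_left)
  finally show ?thesis .
qed

lemma edge_parallel_class:
  assumes i: "i \<in> {1..n}"
  obtains j where "j < k" "\<forall>x\<in>X i. \<forall>y\<in>X i. parallel (r j) x y"
proof -
  have XE: "X i \<subseteq> E"
    using edge_subset[OF i] .
  obtain a where a: "a \<in> X i"
    using edge_nonempty[OF i] by blast
  with XE have aE: "a \<in> E"
    by blast
  have "\<exists>j<k. \<forall>x\<in>X i. parallel (r j) a x"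
  proof (cases "X i = {a}")
    case True
    have "0 < \<sigma> {a}"
      using hyp_rho_singleton_pos[where X = X, OF i a] agree_singleton[OF aE] by simp
    then obtain j where "j < k" "parallel (r j) a a"
      by (rule nonloop_if_pos[OF aE])
    with True show ?thesis
      by auto
  next
    case False
    then obtain b where b: "b \<in> X i" "b \<noteq> a"
      using a by blast
    with XE have bE: "b \<in> E"
      by blast
    have pair: "excess \<sigma> {x, y} = 1" if "x \<in> X i" "y \<in> X i" "x \<noteq> y" for x y
      using excess_in_edge[OF i, of "{x, y}"] that by simp
    have "0 < excess \<sigma> {a, b}"
      using pair[OF a b(1)] b(2) by simp
    then obtain j where j: "j < k" "parallel (r j) a b"
      by (rule parallel_if_excess_pos[OF aE bE])
    note parallel_iff = parallel_iff_excess_pos[OF rank_summand[OF j(1)] aE]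
    have "parallel (r j) a x" if x: "x \<in> X i" for x
    proof (cases "x = a \<or> x = b")
      case True
      then show ?thesis
        using j(2) parallel_refl[OF j(2)] by auto
    next
      case False
      then have "a \<noteq> x" "b \<noteq> x"
        by auto
      from x XE have xE: "x \<in> E"
        by blast
      have "excess \<sigma> {a, b, x} = 2"
        using excess_in_edge[OF i, of "{a, b, x}"] a b x \<open>a \<noteq> x\<close> \<open>b \<noteq> x\<close> b(2) by auto
      then have "excess (r j) {a, b} = excess (r j) {a, x}"
        using pair a b x \<open>a \<noteq> x\<close> \<open>b \<noteq> x\<close> b(2) j(1)
        by (intro excess_pair_eq_if_tight_triple[OF aE bE xE]) auto
      moreover have "0 < excess (r j) {a, b}"
        using j(2) parallel_iff[OF bE] b(2) by auto
      ultimately show ?thesis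
        using parallel_iff[OF xE] \<open>a \<noteq> x\<close> by simp
    qed
    with j(1) show ?thesis
      by blast
  qed
  then obtain j where j: "j < k" "\<forall>x\<in>X i. parallel (r j) a x"
    by blast
  have "parallel (r j) x y" if "x \<in> X i" "y \<in> X i" for x y
  proof (rule parallel_trans[OF polymatroid_summand[OF j(1)]])
    show "parallel (r j) x a" "parallel (r j) a y"
      using j(2) that by (auto intro: parallel_sym)
  qed (use that XE aE in auto)
  with j(1) that show thesis
    by blast
qed

lemma edge_parallel_classes_differ:
  assumes complete: "line_graph_complete X n" and sep: "edges_separated X n"
    and i: "i \<in> {1..n}" "i' \<in> {1..n}" "i \<noteq> i'" and j: "j < k"
    and edge_class: "\<forall>x\<in>X i. \<forall>y\<in>X i. parallel (r j) x y" "\<forall>x\<in>X i'. \<forall>y\<in>X i'. parallel (r j) x y"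
  shows False
proof -
  have "line_graph_adj X i i'"
    using complete i unfolding line_graph_complete_def by blast
  then obtain e where e: "e \<in> X i" "e \<in> X i'"
    unfolding line_graph_adj_def by blast
  obtain a b where ab: "a \<in> X i" "b \<in> X i'" and no_edge: "\<forall>i\<in>{1..n}. \<not> {a, b} \<subseteq> X i"
    using sep[unfolded edges_separated_def, rule_format, OF i] by blast
  have E: "a \<in> E" "b \<in> E" "e \<in> E"
    using ab e edge_subset[OF i(1)] edge_subset[OF i(2)] by blast+
  have "a \<noteq> b"
    using no_edge ab(1) i(1) by auto
  moreover have "parallel (r j) a b"
    using parallel_trans[OF polymatroid_summand[OF j] E(1,3,2)] edge_class ab e by blast
  ultimately have "0 < excess \<sigma> {a, b}"
    using excess_pos_if_parallel j E by blast
  with excess_eq_0_if_no_common_edge[OF E(1,2) no_edge] show False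
    by simp
qed

lemma edge_count_le_sigma:
  assumes complete: "line_graph_complete X n" and sep: "edges_separated X n"
  shows "int n \<le> \<sigma> E"
proof -
  have "\<forall>i\<in>{1..n}. \<exists>j. j < k \<and> (\<forall>x\<in>X i. \<forall>y\<in>X i. parallel (r j) x y)"
    using edge_parallel_class by blast
  from bchoice[OF this] obtain J
    where "\<forall>i\<in>{1..n}. J i < k \<and> (\<forall>x\<in>X i. \<forall>y\<in>X i. parallel (r (J i)) x y)"
    by blast
  then have J: "\<And>i. i \<in> {1..n} \<Longrightarrow> J i < k"
    and edge_class: "\<And>i. i \<in> {1..n} \<Longrightarrow> \<forall>x\<in>X i. \<forall>y\<in>X i. parallel (r (J i)) x y"
    by blast+
  have inj: "inj_on J {1..n}"
  proof (rule inj_onI, rule ccontr)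
    fix i i' assume "i \<in> {1..n}" "i' \<in> {1..n}" "J i = J i'" "i \<noteq> i'"
    then show False
      using edge_parallel_classes_differ[OF complete sep _ _ _ J] edge_class by metis
  qed
  have "1 \<le> r (J i) E" if i: "i \<in> {1..n}" for i
  proof -
    obtain a where a: "a \<in> X i"
      using edge_nonempty[OF i] by blast
    then have "r (J i) {a} \<le> r (J i) E"
      using edge_subset[OF i] by (intro polymatroid_mono[OF polymatroid_summand[OF J[OF i]]]) auto
    moreover have "r (J i) {a} = 1"
      using edge_class[OF i] a unfolding parallel_def by blast
    ultimately show ?thesis
      by simp
  qed
  then have "int n \<le> (\<Sum>i=1..n. r (J i) E)"
    using sum_mono[of "{1..n}" "\<lambda>_. 1 :: int"] by simp
  also have "\<dots> = (\<Sum>j\<in>J ` {1..n}. r j E)"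
    by (simp only: sum.reindex[OF inj] comp_def)
  also have "\<dots> \<le> (\<Sum>j<k. r j E)"
    using J polymatroid_nonneg[OF polymatroid_summand] by (intro sum_mono2) auto
  also have "\<dots> = \<sigma> E"
    by (simp add: sum_ranks)
  finally show ?thesis .
qed

end

lemma truncation_eq_if_Max_le:
  assumes "finite S" "Max (f ` S) \<le> s" "A \<in> S"
  shows "truncation f s A = f A"
proof -
  have "f A \<le> Max (f ` S)"
    using assms(1,3) by (intro Max_ge) auto
  also have "\<dots> \<le> s"
    by (rule assms(2))
  finally show ?thesis
    unfolding truncation_def by (rule min_absorb1)
qed

lemma indecomposable_if_agrees_with_hyp_rho:
  assumes "linear_hypergraph E X n"
    and complete: "line_graph_complete X n"
    and sep: "edges_separated X n"
    and "\<forall>A\<in>small_sets E X n. \<sigma> A = hyp_rho X n A" and "\<sigma> E < int n"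
  shows "indecomposable E \<sigma>"
  unfolding indecomposable_def
proof
  assume "\<exists>(k::nat) r. (\<forall>j<k. matroid_rank E (r j)) \<and> (\<forall>A. A \<subseteq> E \<longrightarrow> \<sigma> A = (\<Sum>j<k. r j A))"
  then obtain k :: nat and r :: "nat \<Rightarrow> 'a set \<Rightarrow> int" where ranks: "\<forall>j<k. matroid_rank E (r j)"
    and sum: "\<forall>A. A \<subseteq> E \<longrightarrow> \<sigma> A = (\<Sum>j<k. r j A)"
    by blast
  interpret matroid_sum_on_hypergraph E X n \<sigma> k r
    using assms(1,4) ranks sum
    by (intro matroid_sum_on_hypergraph.intro matroid_sum.intro matroid_sum_on_hypergraph_axioms.intro) auto
  show False
    using edge_count_le_sigma[OF complete sep] assms(5) by simp
qed

theorem theorem2p15: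
  fixes E :: "'a set" and X :: "nat \<Rightarrow> 'a set" and n :: nat
    and \<sigma> :: "'a set \<Rightarrow> int" and s :: int
  assumes hyp: "hypergraph E X n"
    and inter_le1: "\<forall>i\<in>{1..n}. \<forall>j\<in>{1..n}. i \<noteq> j \<longrightarrow> card (X i \<inter> X j) \<le> 1"
    and complete: "line_graph_complete X n"
    and sep: "\<forall>p\<in>{1..n}. \<forall>q\<in>{1..n}. p \<noteq> q \<longrightarrow>
               (\<exists>a\<in>X p. \<exists>b\<in>X q. \<not> (\<exists>i\<in>{1..n}. {a, b} \<subseteq> X i))"
  shows "(polymatroid E \<sigma> \<and> (\<forall>A\<in>small_sets E X n. \<sigma> A = hyp_rho X n A) \<and> \<sigma> E < int n
            \<longrightarrow> indecomposable E \<sigma>)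
         \<and> (Max (hyp_rho X n ` small_sets E X n) \<le> s \<and> s < int n
            \<longrightarrow> indecomposable E (truncation (hyp_rho X n) s))"
proof -
  have linear: "linear_hypergraph E X n"
    using hyp inter_le1 by unfold_locales
  have "edges_separated X n"
    using sep unfolding edges_separated_def .
  note indecomposable = indecomposable_if_agrees_with_hyp_rho[OF linear complete this]
  have "small_sets E X n \<subseteq> Pow E"
    unfolding small_sets_def by blast
  then have finite_small_sets: "finite (small_sets E X n)"
    by (rule finite_subset) (simp add: linear_hypergraph.finite_E[OF linear])
  have "indecomposable E (truncation (hyp_rho X n) s)"
    if "Max (hyp_rho X n ` small_sets E X n) \<le> s" "s < int n"
  proof (rule indecomposable)
    show "\<forall>A\<in>small_sets E X n. truncation (hyp_rho X n) s A = hyp_rho X n A"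
      using truncation_eq_if_Max_le[OF finite_small_sets that(1)] by blast
    show "truncation (hyp_rho X n) s E < int n"
      using that(2) by (simp add: truncation_def)
  qed
  moreover have "indecomposable E \<sigma>"
    if "\<forall>A\<in>small_sets E X n. \<sigma> A = hyp_rho X n A" "\<sigma> E < int n"
    using that by (rule indecomposable)
  ultimately show ?thesis
    by blast
qed

end
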